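(* For every $n\in\mathbb{N}$ there exists a map $\bar\Gamma\to\Gamma$, $f\mapsto\varphi_n^f$, such that $\varphi_n^{f+n^{-1}\lfloor nc\rfloor}=\varphi_n^f+\lfloor nc\rfloor$ for all $c\in\mathbb{R}$ and $f\in\bar\Gamma$, and $$\sup_{(x,y)\in\mathbb{R}^2}\Big|\tfrac1n\varphi_n^f(nx,\lfloor ny\rfloor)-f(x,y)\Big|\le\frac2n .$$
   Context: $\Gamma$ is the set of functions $h:\mathbb{R}\times\mathbb{Z}\to\mathbb{Z}$ such that (i) for every $y\in\mathbb{Z}$, $x\mapsto h(x,y)$ is piecewise constant with a locally finite set of jumps, each of size $\pm1$, and is upper semicontinuous; (ii) for every $x\in\mathbb{R}$, $y\in\mathbb{Z}$, $h(x,y+1)-h(x,y)\in\{-1,0\}$. $\bar\Gamma$ is the set of continuous $f:\mathbb{R}^2\to\mathbb{R}$ with $f(x,y_2)-f(x,y_1)\in[-(y_2-y_1),0]$ for all $x\in\mathbb{R}$ and $y_1\le y_2$. *)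

theory Defs
  imports "HOL-Analysis.Analysis"
begin

definition usc_real :: "(real \<Rightarrow> real) \<Rightarrow> bool" where
  "usc_real g \<longleftrightarrow> (\<forall>a. open {x. g x < a})"

definition pw_const_unit_jumps :: "(real \<Rightarrow> int) \<Rightarrow> bool" where
  "pw_const_unit_jumps g \<longleftrightarrow>
     (\<forall>a b. finite ({x. \<not> isCont (\<lambda>t. real_of_int (g t)) x} \<inter> {a..b})) \<and>
     (\<forall>x. \<not> isCont (\<lambda>t. real_of_int (g t)) x \<longrightarrow>
        (\<exists>e>0. \<exists>l r. (\<forall>t\<in>{x-e<..<x}. g t = l) \<and> (\<forall>t\<in>{x<..<x+e}. g t = r)
                   \<and> \<bar>r - l\<bar> = 1)) \<and>
     usc_real (\<lambda>t. real_of_int (g t))"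

definition Gamma :: "(real \<Rightarrow> int \<Rightarrow> int) set" where
  "Gamma = {h. (\<forall>y. pw_const_unit_jumps (\<lambda>x. h x y)) \<and>
               (\<forall>x y. h x (y + 1) - h x y \<in> {-1, 0})}"

definition Gamma_bar :: "(real \<Rightarrow> real \<Rightarrow> real) set" where
  "Gamma_bar = {f. continuous_on UNIV (\<lambda>(x, y). f x y) \<and>
                   (\<forall>x y1 y2. y1 \<le> y2 \<longrightarrow>
                      f x y2 - f x y1 \<in> {-(y2 - y1)..0})}"

end

theory Submission
  imports Defs
begin

(* Pointwise rounding of a continuous u : R -> R can jump infinitely often where u oscillates
   around an integer, so the rounding used here has hysteresis: X reaches level k if it is
   joined to a point where u >= k by a segment on which u > k - 1 (X itself excepted), and
   level_round u X, the highest level reached at X, is floor (u X) or floor (u X) + 1.  For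
   each k, reaching level k is eventually constant on either side of every point and is a
   closed condition; since near p only the levels floor (u p) .. floor (u p) + 2 matter,
   level_round u is locally constant on both sides of every point, upper semicontinuous, and
   jumps by exactly one.  It is monotone in u and commutes with integer shifts, so rounding
   the rows x -> n f (x / n, Y / n) of f in Gamma_bar gives an element of Gamma within 2 of n f. *)

definition reaches_level :: "(real \<Rightarrow> real) \<Rightarrow> int \<Rightarrow> real \<Rightarrow> bool" where
  "reaches_level u k X \<longleftrightarrow>
     (\<exists>t. k \<le> u t \<and> (\<forall>s\<in>{min X t..max X t} - {X}. k - 1 < u s))"

definition level_round :: "(real \<Rightarrow> real) \<Rightarrow> real \<Rightarrow> int" where
  "level_round u X = (if reaches_level u (\<lfloor>u X\<rfloor> + 1) X then \<lfloor>u X\<rfloor> + 1 else \<lfloor>u X\<rfloor>)"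

lemma reaches_level_if_le_floor: "k \<le> \<lfloor>u X\<rfloor> \<Longrightarrow> reaches_level u k X"
  unfolding reaches_level_def by (rule exI[of _ X]) (auto simp: le_floor_iff)

lemma reaches_level_antimono: "reaches_level u k X \<Longrightarrow> j \<le> k \<Longrightarrow> reaches_level u j X"
  unfolding reaches_level_def by (smt (verit) of_int_le_iff)

lemma reaches_level_mono_fun:
  "(\<And>x. u x \<le> v x) \<Longrightarrow> reaches_level u k X \<Longrightarrow> reaches_level v k X"
  unfolding reaches_level_def by (meson less_le_trans order_trans)

lemma reaches_level_add_int:
  "reaches_level (\<lambda>x. u x + of_int m) (k + m) X \<longleftrightarrow> reaches_level u k X"
  unfolding reaches_level_def by simp

lemma reaches_level_reflect:
  "reaches_level (\<lambda>x. u (- x)) k X \<longleftrightarrow> reaches_level u k (- X)"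
proof -
  have reflect: "reaches_level (\<lambda>x. v (- x)) k Y" if reach: "reaches_level v k (- Y)" for v Y
  proof -
    obtain t where t: "k \<le> v t" "\<forall>s\<in>{min (- Y) t..max (- Y) t} - {- Y}. k - 1 < v s"
      using reach unfolding reaches_level_def by blast
    have "- s \<in> {min (- Y) t..max (- Y) t} - {- Y}" if "s \<in> {min Y (- t)..max Y (- t)} - {Y}" for s
      using that by auto
    then show ?thesis
      unfolding reaches_level_def using t by (intro exI[of _ "- t"]) auto
  qed
  show ?thesis
    using reflect[of u X] reflect[of "\<lambda>x. u (- x)" "- X"] by auto
qed

lemma reaches_level_imp_ge:
  assumes cont: "\<And>x. isCont u x" and "reaches_level u k X"
  shows "k - 1 \<le> u X"
proof -
  obtain t where t: "k \<le> u t" "\<forall>s\<in>{min X t..max X t} - {X}. k - 1 < u s"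
    using assms(2) unfolding reaches_level_def by blast
  show ?thesis
  proof (cases "t = X")
    case False
    have "continuous_on (closure {min X t<..<max X t}) u"
      using cont by (simp add: continuous_at_imp_continuous_on)
    moreover have "X \<in> closure {min X t<..<max X t}"
      using False by (simp add: min_def max_def)
    moreover have "k - 1 \<le> u s" if "s \<in> {min X t<..<max X t}" for s
    proof -
      have "s \<in> {min X t..max X t} - {X}"
        using that by auto
      with t(2) show ?thesis
        by (meson less_imp_le)
    qed
    ultimately show ?thesis
      by (rule continuous_ge_on_closure)
  qed (use t in simp)
qed

lemma reaches_level_transfer:
  assumes "reaches_level u k X" "\<forall>s\<in>{min X Y..max X Y} - {Y}. k - 1 < u s"
  shows "reaches_level u k Y"
proof -
  obtain t where t: "k \<le> u t" "\<forall>s\<in>{min X t..max X t} - {X}. k - 1 < u s"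
    using assms(1) unfolding reaches_level_def by blast
  have "{min Y t..max Y t} - {Y} \<subseteq> ({min X t..max X t} - {X}) \<union> ({min X Y..max X Y} - {Y})"
    by auto
  then show ?thesis
    unfolding reaches_level_def using t assms(2) by blast
qed

lemma reaches_level_between:
  assumes "k \<le> u t" "\<forall>s\<in>{min X t..max X t} - {X}. k - 1 < u s" "Y \<in> {min X t..max X t}"
  shows "reaches_level u k Y"
proof -
  have "{min Y t..max Y t} - {Y} \<subseteq> {min X t..max X t} - {X}"
    using assms(3) by auto
  then show ?thesis
    unfolding reaches_level_def using assms(1,2) by blast
qed

(* A witness for X lies beyond b, since u stays below k on (p, b) and u p \<le> k - 1. *)
lemma reaches_level_propagates_right:
  fixes u :: "real \<Rightarrow> real" and k :: int
  assumes "u p \<le> k - 1" "\<forall>s\<in>{p<..<b}. u s < k" "X \<in> {p<..<b}" "reaches_level u k X"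
  shows "\<forall>s\<in>{X<..<b}. k - 1 < u s" "\<forall>s\<in>{X..<b}. reaches_level u k s"
proof -
  obtain t where t: "k \<le> u t" "\<forall>s\<in>{min X t..max X t} - {X}. k - 1 < u s"
    using assms(4) unfolding reaches_level_def by blast
  have "\<not> t \<le> p"
  proof
    assume "t \<le> p"
    then have "p \<in> {min X t..max X t} - {X}"
      using assms(3) by auto
    then show False
      using assms(1) t(2) by force
  qed
  moreover have "t \<notin> {p<..<b}"
    using assms(2) t(1) by force
  ultimately have "min X t = X" "max X t = t" "b \<le> t"
    using assms(3) by auto
  then show "\<forall>s\<in>{X<..<b}. k - 1 < u s" "\<forall>s\<in>{X..<b}. reaches_level u k s"
    using t by (auto intro: reaches_level_between[OF t])
qed

lemma reaches_level_eventually_if_frequently: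
  fixes u :: "real \<Rightarrow> real" and k :: int
  assumes "u p \<le> k - 1" "p < b" "\<forall>s\<in>{p<..<b}. u s < k"
    and "\<exists>\<^sub>F X in at_right p. reaches_level u k X"
  shows "\<forall>\<^sub>F X in at_right p. reaches_level u k X"
proof -
  have "reaches_level u k X" if X: "X \<in> {p<..<b}" for X
  proof -
    obtain X' where "X' \<in> {p<..<X}" "reaches_level u k X'"
      using assms(4) X unfolding frequently_def eventually_at_right_field by fastforce
    then show ?thesis
      using reaches_level_propagates_right(2)[of u p k b X'] assms(1,3) X by auto
  qed
  then show ?thesis
    using assms(2) by (intro eventually_at_rightI) auto
qed

lemma reaches_level_if_reached_on_right:
  fixes u :: "real \<Rightarrow> real" and k :: int
  assumes "u p \<le> k - 1" "p < b" "\<forall>s\<in>{p<..<b}. u s < k \<and> reaches_level u k s"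
  shows "reaches_level u k p"
proof -
  have above: "k - 1 < u s" if "s \<in> {p<..<b}" for s
  proof -
    have "(p + s) / 2 \<in> {p<..<b}" "s \<in> {(p + s) / 2<..<b}"
      using that by auto
    then show ?thesis
      using reaches_level_propagates_right(1)[of u p k b "(p + s) / 2"] assms(1,3) by auto
  qed
  define X where "X = (p + b) / 2"
  have X: "min X p = p" "max X p = X" "X \<in> {p<..<b}"
    using assms(2) by (auto simp: X_def)
  show ?thesis
    by (rule reaches_level_transfer[of u k X]) (use assms(3) above X in auto)
qed

lemma eventually_reaches_level_iff:
  assumes cont: "\<And>x. isCont u x" and "k - 1 < u p"
  shows "\<forall>\<^sub>F X in nhds p. reaches_level u k X \<longleftrightarrow> reaches_level u k p"
proof -
  obtain d where "d > 0" and d: "\<And>s. dist s p < d \<Longrightarrow> k - 1 < u s"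
    using order_tendstoD(1)[OF cont[unfolded isCont_def tendsto_at_iff_tendsto_nhds] assms(2)]
    unfolding eventually_nhds_metric by blast
  show ?thesis
    unfolding eventually_nhds_metric
  proof (intro exI[of _ d] conjI allI impI)
    fix X assume "dist X p < d"
    then have "\<forall>s\<in>{min X p..max X p}. k - 1 < u s"
      using d by (auto simp: dist_real_def)
    then show "reaches_level u k X \<longleftrightarrow> reaches_level u k p"
      using reaches_level_transfer[of u k X p] reaches_level_transfer[of u k p X]
      by (auto simp: min.commute max.commute)
  qed fact
qed

lemma reaches_level_if_le_level_round: "k \<le> level_round u X \<Longrightarrow> reaches_level u k X"
  unfolding level_round_def
  by (auto split: if_splits intro: reaches_level_antimono reaches_level_if_le_floor)

lemma le_level_round_iff:
  assumes cont: "\<And>x. isCont u x"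
  shows "k \<le> level_round u X \<longleftrightarrow> reaches_level u k X"
proof
  assume reach: "reaches_level u k X"
  then have "k - 1 \<le> \<lfloor>u X\<rfloor>"
    using reaches_level_imp_ge[OF cont] by (simp add: le_floor_iff)
  with reach show "k \<le> level_round u X"
    unfolding level_round_def by (cases "k = \<lfloor>u X\<rfloor> + 1") auto
qed (rule reaches_level_if_le_level_round)

lemma level_round_bounds: "\<lfloor>u X\<rfloor> \<le> level_round u X" "level_round u X \<le> \<lfloor>u X\<rfloor> + 1"
  by (auto simp: level_round_def)

lemma level_round_mono:
  assumes "\<And>x. isCont v x" "\<And>x. u x \<le> v x"
  shows "level_round u X \<le> level_round v X"
proof -
  have "reaches_level u (level_round u X) X"
    by (simp add: reaches_level_if_le_level_round)
  then have "reaches_level v (level_round u X) X"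
    by (rule reaches_level_mono_fun[OF assms(2)])
  then show ?thesis
    by (simp add: le_level_round_iff[OF assms(1)])
qed

lemma level_round_add_int: "level_round (\<lambda>x. u x + of_int m) X = level_round u X + m"
  using reaches_level_add_int[of u m "\<lfloor>u X\<rfloor> + 1" X] by (simp add: level_round_def add_ac)

lemma level_round_reflect: "level_round (\<lambda>x. u (- x)) X = level_round u (- X)"
  unfolding level_round_def reaches_level_reflect by simp

lemma reaches_level_eventually_const_at_right:
  assumes cont: "\<And>x. isCont u x"
  shows "\<exists>b. \<forall>\<^sub>F X in at_right p. reaches_level u k X = b"
proof -
  have lim: "(u \<longlongrightarrow> u p) (at_right p)"
    using cont[of p] by (simp add: isCont_def filterlim_at_split)
  consider "u p < k - 1" | "k - 1 < u p" | "u p = k - 1"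
    by linarith
  then show ?thesis
  proof cases
    case 1
    have "\<forall>\<^sub>F X in at_right p. \<not> reaches_level u k X"
      using order_tendstoD(2)[OF lim 1]
      by eventually_elim (use reaches_level_imp_ge[OF cont] in force)
    then show ?thesis
      by (intro exI[of _ False]) simp
  next
    case 2
    have "\<forall>\<^sub>F X in at_right p. reaches_level u k X = reaches_level u k p"
      using eventually_reaches_level_iff[OF cont 2]
      by (auto simp: eventually_at_filter elim: eventually_mono)
    then show ?thesis
      by blast
  next
    case 3
    obtain b where "p < b" and below: "\<forall>s\<in>{p<..<b}. u s < k"
      using order_tendstoD(2)[OF lim, of k] 3 unfolding eventually_at_right_field by auto
    show ?thesis
    proof (cases "\<exists>\<^sub>F X in at_right p. reaches_level u k X")
      case True
      then have "\<forall>\<^sub>F X in at_right p. reaches_level u k X"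
        using reaches_level_eventually_if_frequently[of u p k b] 3 \<open>p < b\<close> below by simp
      then show ?thesis
        by (intro exI[of _ True]) simp
    next
      case False
      then show ?thesis
        by (intro exI[of _ False]) (simp add: not_frequently)
    qed
  qed
qed

lemma reaches_level_if_eventually_at_right:
  assumes cont: "\<And>x. isCont u x" and ev: "\<forall>\<^sub>F X in at_right p. reaches_level u k X"
  shows "reaches_level u k p"
proof -
  have lim: "(u \<longlongrightarrow> u p) (at_right p)"
    using cont[of p] by (simp add: isCont_def filterlim_at_split)
  consider "u p < k - 1" | "k - 1 < u p" | "u p = k - 1"
    by linarith
  then show ?thesis
  proof cases
    case 1
    have "\<forall>\<^sub>F X in at_right p. False"
      using order_tendstoD(2)[OF lim 1] ev
      by eventually_elim (use reaches_level_imp_ge[OF cont] in force)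
    then show ?thesis
      by simp
  next
    case 2
    have "\<forall>\<^sub>F X in at_right p. reaches_level u k X = reaches_level u k p"
      using eventually_reaches_level_iff[OF cont 2]
      by (auto simp: eventually_at_filter elim: eventually_mono)
    then have "\<forall>\<^sub>F X in at_right p. reaches_level u k p"
      using ev by eventually_elim simp
    then show ?thesis
      by simp
  next
    case 3
    obtain b where "p < b" "\<forall>s\<in>{p<..<b}. u s < k \<and> reaches_level u k s"
      using eventually_conj[OF order_tendstoD(2)[OF lim, of k] ev] 3
      unfolding eventually_at_right_field by auto
    then show ?thesis
      using reaches_level_if_reached_on_right[of u p k b] 3 by simp
  qed
qed

lemma level_round_eq_if_levels_agree:
  assumes cont: "\<And>x. isCont u x" and "\<bar>u X - u p\<bar> < 1" "\<bar>u Y - u p\<bar> < 1"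
    and "\<forall>k\<in>{\<lfloor>u p\<rfloor>..\<lfloor>u p\<rfloor> + 2}. reaches_level u k X = reaches_level u k Y"
  shows "level_round u X = level_round u Y"
proof -
  have "reaches_level u k X = reaches_level u k Y" for k
  proof -
    consider "k + 1 \<le> \<lfloor>u p\<rfloor>" | "k \<in> {\<lfloor>u p\<rfloor>..\<lfloor>u p\<rfloor> + 2}" | "\<lfloor>u p\<rfloor> + 3 \<le> k"
      by fastforce
    then show ?thesis
    proof cases
      case 1
      then have "k \<le> \<lfloor>u X\<rfloor>" "k \<le> \<lfloor>u Y\<rfloor>"
        using assms(2,3) by (simp_all add: le_floor_iff)
      then show ?thesis by (simp add: reaches_level_if_le_floor)
    next
      case 3
      then have "u p < of_int (k - 2)"
        by (simp only: floor_less_iff[symmetric])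
      then have "u X < k - 1" "u Y < k - 1"
        using assms(2,3) by auto
      then show ?thesis
        using reaches_level_imp_ge[OF cont] by force
    qed (use assms(4) in blast)
  qed
  then have "k \<le> level_round u X \<longleftrightarrow> k \<le> level_round u Y" for k
    by (simp add: le_level_round_iff[OF cont])
  from this[of "level_round u X"] this[of "level_round u Y"] show ?thesis
    by (intro order.antisym) (simp_all only: order.refl simp_thms)
qed

lemma level_round_eventually_const_at_right:
  assumes cont: "\<And>x. isCont u x"
  obtains r where "\<forall>\<^sub>F X in at_right p. level_round u X = r" "r \<le> level_round u p"
proof -
  have "\<forall>k. \<exists>b. \<forall>\<^sub>F X in at_right p. reaches_level u k X = b"
    by (intro allI reaches_level_eventually_const_at_right[OF cont])
  then obtain B where B: "\<forall>k. \<forall>\<^sub>F X in at_right p. reaches_level u k X = B k"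
    by (rule choice[THEN exE])
  define good where "good X \<longleftrightarrow> \<bar>u X - u p\<bar> < 1 \<and>
      (\<forall>k\<in>{\<lfloor>u p\<rfloor>..\<lfloor>u p\<rfloor> + 2}. reaches_level u k X = B k)" for X
  have "(u \<longlongrightarrow> u p) (at_right p)"
    using cont[of p] by (simp add: isCont_def filterlim_at_split)
  then have "\<forall>\<^sub>F X in at_right p. \<bar>u X - u p\<bar> < 1"
    using tendstoD[of u "u p" _ 1] by (simp add: dist_real_def)
  moreover have "\<forall>\<^sub>F X in at_right p. \<forall>k\<in>{\<lfloor>u p\<rfloor>..\<lfloor>u p\<rfloor> + 2}. reaches_level u k X = B k"
    using B by (intro eventually_ball_finite) auto
  ultimately have near: "\<forall>\<^sub>F X in at_right p. good X"
    unfolding good_def by (rule eventually_conj)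
  from eventually_happens'[OF trivial_limit_at_right_real near] obtain X\<^sub>0 where "good X\<^sub>0" ..
  have const: "\<forall>\<^sub>F X in at_right p. level_round u X = level_round u X\<^sub>0"
    using near
  proof eventually_elim
    case (elim X)
    show ?case
      by (rule level_round_eq_if_levels_agree[OF cont, where p = p])
        (use elim \<open>good X\<^sub>0\<close> in \<open>auto simp: good_def\<close>)
  qed
  then have "\<forall>\<^sub>F X in at_right p. reaches_level u (level_round u X\<^sub>0) X"
    by eventually_elim (simp add: reaches_level_if_le_level_round)
  then have "reaches_level u (level_round u X\<^sub>0) p"
    by (rule reaches_level_if_eventually_at_right[OF cont])
  then have "level_round u X\<^sub>0 \<le> level_round u p"
    by (simp add: le_level_round_iff[OF cont])
  with const show thesis
    by (rule that)
qed

lemma level_round_eventually_const_at_left: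
  assumes cont: "\<And>x. isCont u x"
  obtains l where "\<forall>\<^sub>F X in at_left p. level_round u X = l" "l \<le> level_round u p"
proof -
  have "isCont (\<lambda>x. u (- x)) x" for x
    by (rule isCont_o2[where f = uminus, OF _ cont]) (intro continuous_intros)
  then obtain l where l: "\<forall>\<^sub>F X in at_right (- p). level_round (\<lambda>x. u (- x)) X = l"
      "l \<le> level_round (\<lambda>x. u (- x)) (- p)"
    by (rule level_round_eventually_const_at_right)
  have "\<forall>\<^sub>F X in at_left p. level_round u X = l"
    using l(1) unfolding at_left_minus eventually_filtermap level_round_reflect by simp
  moreover have "l \<le> level_round u p"
    using l(2) by (simp add: level_round_reflect)
  ultimately show thesis
    by (rule that)
qed

lemma eventually_le_level_round:
  assumes cont: "\<And>x. isCont u x" and "k \<le> level_round u p" "k - 1 < u p"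
  shows "\<forall>\<^sub>F X in nhds p. k \<le> level_round u X"
  using eventually_reaches_level_iff[OF cont assms(3)]
proof eventually_elim
  case (elim X)
  then show ?case
    using assms(2) by (simp add: le_level_round_iff[OF cont])
qed

context
  fixes u :: "real \<Rightarrow> real" and p :: real and l r :: int
  assumes cont: "\<And>x. isCont u x"
    and left: "\<forall>\<^sub>F X in at_left p. level_round u X = l" "l \<le> level_round u p"
    and right: "\<forall>\<^sub>F X in at_right p. level_round u X = r" "r \<le> level_round u p"
begin

lemma le_level_round_sides:
  fixes k :: int
  assumes "k \<le> level_round u p" "k - 1 < u p"
  shows "k \<le> l" "k \<le> r"
proof -
  have nhds: "\<forall>\<^sub>F X in nhds p. k \<le> level_round u X"
    by (rule eventually_le_level_round[OF cont assms])
  have "\<forall>\<^sub>F X in at_left p. k \<le> l"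
    using nhds left(1) unfolding eventually_at_filter by eventually_elim auto
  moreover have "\<forall>\<^sub>F X in at_right p. k \<le> r"
    using nhds right(1) unfolding eventually_at_filter by eventually_elim auto
  ultimately show "k \<le> l" "k \<le> r"
    by simp_all
qed

lemma level_round_sides_dist: "\<bar>l - r\<bar> \<le> 1"
proof (rule ccontr)
  assume "\<not> \<bar>l - r\<bar> \<le> 1"
  then have high: "min l r + 2 \<le> level_round u p"
    using left(2) right(2) by linarith
  then have "reaches_level u (min l r + 2) p"
    by (rule reaches_level_if_le_level_round)
  from reaches_level_imp_ge[OF cont this] have "min l r < u p"
    by simp
  then show False
    using le_level_round_sides[of "min l r + 1"] high by auto
qed

lemma level_round_eq_sides:
  assumes "l = r"
  shows "level_round u p = l"
proof (rule ccontr)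
  define c where "c = level_round u p"
  assume "level_round u p \<noteq> l"
  then have "l < c"
    using left(2) by (simp add: c_def)
  then have "u p \<le> c - 1"
    using le_level_round_sides[of c] by (force simp: c_def)
  have "reaches_level u c p"
    by (simp add: c_def reaches_level_if_le_level_round)
  then obtain t where t: "c \<le> u t" "\<forall>s\<in>{min p t..max p t} - {p}. c - 1 < u s"
    unfolding reaches_level_def by blast
  have reach: "c \<le> level_round u X" if "X \<in> {min p t..max p t}" for X
    using reaches_level_between[OF t that] by (simp add: le_level_round_iff[OF cont])
  have "t \<noteq> p"
    using t(1) \<open>u p \<le> c - 1\<close> by auto
  then consider "p < t" | "t < p"
    by linarith
  then show False
  proof cases
    case 1
    then have "\<forall>\<^sub>F X in at_right p. c \<le> level_round u X"
      using reach by (intro eventually_at_rightI[of p t]) auto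
    then have "\<forall>\<^sub>F X in at_right p. False"
      using right(1) by eventually_elim (use \<open>l < c\<close> assms in auto)
    then show False
      by simp
  next
    case 2
    then have "\<forall>\<^sub>F X in at_left p. c \<le> level_round u X"
      using reach by (intro eventually_at_leftI[of t p]) auto
    then have "\<forall>\<^sub>F X in at_left p. False"
      using left(1) by eventually_elim (use \<open>l < c\<close> in auto)
    then show False
      by simp
  qed
qed

end

lemma level_round_local_structure:
  assumes cont: "\<And>x. isCont u x"
  obtains a b l r where "a < p" "p < b"
    "\<And>X. X \<in> {a<..<p} \<Longrightarrow> level_round u X = l" "\<And>X. X \<in> {p<..<b} \<Longrightarrow> level_round u X = r"
    "l \<le> level_round u p" "r \<le> level_round u p" "\<bar>l - r\<bar> \<le> 1" "l = r \<Longrightarrow> level_round u p = l"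
proof -
  obtain l where l: "\<forall>\<^sub>F X in at_left p. level_round u X = l" "l \<le> level_round u p"
    by (rule level_round_eventually_const_at_left[OF cont])
  obtain r where r: "\<forall>\<^sub>F X in at_right p. level_round u X = r" "r \<le> level_round u p"
    by (rule level_round_eventually_const_at_right[OF cont])
  obtain a where a: "a < p" "\<And>X. X \<in> {a<..<p} \<Longrightarrow> level_round u X = l"
    using l(1) unfolding eventually_at_left_field by auto
  obtain b where b: "p < b" "\<And>X. X \<in> {p<..<b} \<Longrightarrow> level_round u X = r"
    using r(1) unfolding eventually_at_right_field by auto
  show thesis
    by (rule that[OF a(1) b(1) a(2) b(2) l(2) r(2)])
      (use level_round_sides_dist[OF cont l r] level_round_eq_sides[OF cont l r] in auto)
qed

lemma isCont_if_const_on_open: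
  assumes "open S" "q \<in> S" "\<And>t. t \<in> S \<Longrightarrow> f t = c"
  shows "isCont f q"
proof -
  have "\<forall>\<^sub>F t in nhds q. f t = c"
    using assms eventually_nhds by blast
  then show ?thesis
    by (simp add: isCont_cong)
qed

lemma eventually_isCont_level_round:
  assumes cont: "\<And>x. isCont u x"
  shows "\<forall>\<^sub>F q in at p. isCont (\<lambda>t. real_of_int (level_round u t)) q"
proof -
  obtain a b l r where S: "a < p" "p < b"
    "\<And>X. X \<in> {a<..<p} \<Longrightarrow> level_round u X = l" "\<And>X. X \<in> {p<..<b} \<Longrightarrow> level_round u X = r"
    by (rule level_round_local_structure[OF cont, of p]) blast
  have "isCont (\<lambda>t. real_of_int (level_round u t)) q" if "q \<in> {a<..<p}" for q
    using that S(3) by (intro isCont_if_const_on_open[of "{a<..<p}" _ _ "of_int l"]) auto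
  then have "\<forall>\<^sub>F q in at_left p. isCont (\<lambda>t. real_of_int (level_round u t)) q"
    using S(1) by (intro eventually_at_leftI[of a p])
  moreover have "isCont (\<lambda>t. real_of_int (level_round u t)) q" if "q \<in> {p<..<b}" for q
    using that S(4) by (intro isCont_if_const_on_open[of "{p<..<b}" _ _ "of_int r"]) auto
  then have "\<forall>\<^sub>F q in at_right p. isCont (\<lambda>t. real_of_int (level_round u t)) q"
    using S(2) by (intro eventually_at_rightI[of p b])
  ultimately show ?thesis
    by (simp add: eventually_at_split)
qed

lemma level_round_unit_jump:
  assumes cont: "\<And>x. isCont u x" and disc: "\<not> isCont (\<lambda>t. real_of_int (level_round u t)) p"
  shows "\<exists>e>0. \<exists>l r. (\<forall>t\<in>{p-e<..<p}. level_round u t = l) \<and>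
      (\<forall>t\<in>{p<..<p+e}. level_round u t = r) \<and> \<bar>r - l\<bar> = 1"
proof -
  obtain a b l r where S: "a < p" "p < b"
    "\<And>X. X \<in> {a<..<p} \<Longrightarrow> level_round u X = l" "\<And>X. X \<in> {p<..<b} \<Longrightarrow> level_round u X = r"
    "\<bar>l - r\<bar> \<le> 1" "l = r \<Longrightarrow> level_round u p = l"
    by (rule level_round_local_structure[OF cont, of p]) blast
  have "l \<noteq> r"
  proof
    assume "l = r"
    then have "level_round u t = l" if "t \<in> {a<..<b}" for t
      using S that by (cases t p rule: linorder_cases) auto
    then have "isCont (\<lambda>t. real_of_int (level_round u t)) p"
      using S(1,2) by (intro isCont_if_const_on_open[of "{a<..<b}" _ _ "of_int l"]) auto
    with disc show False ..
  qed
  then show ?thesis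
    using S by (intro exI[of _ "min (p - a) (b - p)"] conjI exI[of _ l] exI[of _ r]) auto
qed

lemma level_round_usc:
  assumes cont: "\<And>x. isCont u x"
  shows "usc_real (\<lambda>t. real_of_int (level_round u t))"
  unfolding usc_real_def
proof (intro allI Topological_Spaces.openI)
  fix c x assume x: "x \<in> {x. real_of_int (level_round u x) < c}"
  obtain a b l r where S: "a < x" "x < b"
    "\<And>X. X \<in> {a<..<x} \<Longrightarrow> level_round u X = l" "\<And>X. X \<in> {x<..<b} \<Longrightarrow> level_round u X = r"
    "l \<le> level_round u x" "r \<le> level_round u x"
    by (rule level_round_local_structure[OF cont, of x]) blast
  have "level_round u t \<le> level_round u x" if "t \<in> {a<..<b}" for t
    using S that by (cases t x rule: linorder_cases) auto
  then have "{a<..<b} \<subseteq> {x. real_of_int (level_round u x) < c}"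
    using x by fastforce
  then show "\<exists>T. open T \<and> x \<in> T \<and> T \<subseteq> {x. real_of_int (level_round u x) < c}"
    using S(1,2) by (intro exI[of _ "{a<..<b}"]) auto
qed

lemma level_round_pw_const_unit_jumps:
  assumes cont: "\<And>x. isCont u x"
  shows "pw_const_unit_jumps (level_round u)"
proof -
  let ?D = "{x. \<not> isCont (\<lambda>t. real_of_int (level_round u t)) x}"
  have "\<not> p islimpt ?D" for p
    using eventually_isCont_level_round[OF cont] by (simp add: islimpt_iff_eventually)
  then have "finite (?D \<inter> {a..b})" for a b
    using finite_not_islimpt_in_compact[OF compact_Icc, of a b ?D] by (simp add: Int_commute)
  with level_round_unit_jump[OF cont] level_round_usc[OF cont] show ?thesis
    unfolding pw_const_unit_jumps_def by (intro conjI allI impI)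
qed

lemma Gamma_bar_isCont_row:
  assumes "f \<in> Gamma_bar"
  shows "isCont (\<lambda>x. s * f (x / s) y) x"
proof -
  have "isCont (\<lambda>x. (x / s, y)) x"
    unfolding divide_inverse by (intro continuous_intros)
  moreover have "isCont (\<lambda>(x, y). f x y) z" for z
    using assms continuous_on_eq_continuous_at[OF open_UNIV] unfolding Gamma_bar_def by blast
  ultimately have "isCont (\<lambda>x. (\<lambda>(x, y). f x y) (x / s, y)) x"
    by (rule isCont_o2)
  then show ?thesis
    by (simp add: continuous_intros)
qed

lemma Gamma_bar_scaled_column_bounds:
  assumes "f \<in> Gamma_bar" "s \<ge> 0" "y\<^sub>1 \<le> y\<^sub>2"
  shows "s * f x y\<^sub>2 \<le> s * f x y\<^sub>1" "s * f x y\<^sub>1 \<le> s * f x y\<^sub>2 + s * (y\<^sub>2 - y\<^sub>1)"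
proof -
  have "f x y\<^sub>2 - f x y\<^sub>1 \<in> {- (y\<^sub>2 - y\<^sub>1)..0}"
    using assms(1,3) unfolding Gamma_bar_def by blast
  then have "s * (f x y\<^sub>2 - f x y\<^sub>1) \<le> 0" "s * (- (y\<^sub>2 - y\<^sub>1)) \<le> s * (f x y\<^sub>2 - f x y\<^sub>1)"
    using assms(2) by (auto intro: mult_nonneg_nonpos mult_left_mono)
  then show "s * f x y\<^sub>2 \<le> s * f x y\<^sub>1" "s * f x y\<^sub>1 \<le> s * f x y\<^sub>2 + s * (y\<^sub>2 - y\<^sub>1)"
    by (simp_all add: algebra_simps)
qed

definition discretize :: "real \<Rightarrow> (real \<Rightarrow> real \<Rightarrow> real) \<Rightarrow> real \<Rightarrow> int \<Rightarrow> int" where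
  "discretize s f X Y = level_round (\<lambda>x. s * f (x / s) (of_int Y / s)) X"

lemma discretize_in_Gamma:
  assumes "s > 0" "f \<in> Gamma_bar"
  shows "discretize s f \<in> Gamma"
proof -
  have cont: "isCont (\<lambda>x. s * f (x / s) y) x" for x y
    using Gamma_bar_isCont_row[OF assms(2)] .
  have "discretize s f X (Y + 1) - discretize s f X Y \<in> {-1, 0}" for X Y
  proof -
    define u where "u x = s * f (x / s) (of_int Y / s)" for x
    define v where "v x = s * f (x / s) (of_int (Y + 1) / s)" for x
    have "of_int Y / s \<le> of_int (Y + 1) / s" "s * (of_int (Y + 1) / s - of_int Y / s) = 1"
      using assms(1) by (simp_all add: divide_right_mono field_simps)
    then have vu: "v x \<le> u x" "u x \<le> v x + 1" for x
      using Gamma_bar_scaled_column_bounds[OF assms(2), of s "of_int Y / s" "of_int (Y + 1) / s" "x / s"]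
        assms(1) by (simp_all add: u_def v_def)
    have "isCont u x" "isCont (\<lambda>x. v x + of_int 1) x" for x
      unfolding u_def[abs_def] v_def[abs_def] by (intro cont continuous_intros)+
    then have "level_round v X \<le> level_round u X"
      "level_round u X \<le> level_round (\<lambda>x. v x + of_int 1) X"
      using vu by (auto intro!: level_round_mono)
    moreover have "level_round (\<lambda>x. v x + of_int 1) X = level_round v X + 1"
      by (rule level_round_add_int)
    moreover have "discretize s f X (Y + 1) = level_round v X" "discretize s f X Y = level_round u X"
      by (simp_all add: discretize_def u_def[abs_def] v_def[abs_def])
    ultimately show ?thesis
      by auto
  qed
  moreover have "pw_const_unit_jumps (\<lambda>X. discretize s f X Y)" for Y
    using level_round_pw_const_unit_jumps[OF cont] by (simp add: discretize_def)
  ultimately show ?thesis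
    unfolding Gamma_def by blast
qed

lemma discretize_add_int:
  assumes "s \<noteq> 0"
  shows "discretize s (\<lambda>x y. f x y + of_int m / s) = (\<lambda>X Y. discretize s f X Y + m)"
proof (intro ext)
  fix X Y
  have "(\<lambda>x. s * (f (x / s) (of_int Y / s) + of_int m / s))
      = (\<lambda>x. s * f (x / s) (of_int Y / s) + of_int m)"
    using assms by (simp add: distrib_left)
  then show "discretize s (\<lambda>x y. f x y + of_int m / s) X Y = discretize s f X Y + m"
    by (simp add: discretize_def level_round_add_int)
qed

lemma discretize_approx:
  assumes "s > 0" "f \<in> Gamma_bar"
  shows "\<bar>of_int (discretize s f (s * x) \<lfloor>s * y\<rfloor>) / s - f x y\<bar> \<le> 2 / s"
proof -
  define Y where "Y = \<lfloor>s * y\<rfloor>"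
  define a where "a = s * f x (of_int Y / s)"
  define D where "D = discretize s f (s * x) Y"
  have "of_int Y \<le> s * y" "s * y < of_int Y + 1"
    using floor_correct[of "s * y"] by (simp_all add: Y_def)
  moreover have "s * (y - of_int Y / s) = s * y - of_int Y"
    using assms(1) by (simp add: right_diff_distrib)
  ultimately have "of_int Y / s \<le> y" "s * (y - of_int Y / s) \<le> 1"
    using assms(1) by (simp_all add: pos_divide_le_eq mult.commute)
  then have "s * f x y \<le> a" "a \<le> s * f x y + 1"
    using Gamma_bar_scaled_column_bounds[OF assms(2), of s "of_int Y / s" y x] assms(1)
    by (auto simp: a_def)
  moreover have "\<lfloor>a\<rfloor> \<le> D" "D \<le> \<lfloor>a\<rfloor> + 1"
    using level_round_bounds[of "\<lambda>x. s * f (x / s) (of_int Y / s)" "s * x"] assms(1)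
    by (simp_all add: D_def discretize_def a_def)
  ultimately have "\<bar>of_int D - s * f x y\<bar> \<le> 2"
    using floor_correct[of a] by linarith
  moreover have "of_int D / s - f x y = (of_int D - s * f x y) / s"
    using assms(1) by (simp add: field_simps)
  ultimately show ?thesis
    using assms(1) by (simp add: D_def Y_def abs_divide divide_right_mono)
qed

theorem proposition4p10:
  fixes n :: nat
  assumes "n \<ge> 1"
  shows "\<exists>\<phi> :: (real \<Rightarrow> real \<Rightarrow> real) \<Rightarrow> (real \<Rightarrow> int \<Rightarrow> int).
    (\<forall>f\<in>Gamma_bar. \<phi> f \<in> Gamma) \<and>
    (\<forall>c::real. \<forall>f\<in>Gamma_bar.
        \<phi> (\<lambda>x y. f x y + real_of_int \<lfloor>real n * c\<rfloor> / real n)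
          = (\<lambda>x y. \<phi> f x y + \<lfloor>real n * c\<rfloor>)) \<and>
    (\<forall>f\<in>Gamma_bar. \<forall>x y::real.
        \<bar>real_of_int (\<phi> f (real n * x) \<lfloor>real n * y\<rfloor>) / real n - f x y\<bar> \<le> 2 / real n)"
proof -
  have "real n > 0"
    using assms by simp
  then show ?thesis
    by (intro exI[of _ "discretize (real n)"])
      (simp add: discretize_in_Gamma discretize_add_int discretize_approx)
qed

end
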